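(* Let $\mathcal Z$ be a compact metric space with a Radon measure $\mathcal H$, let $\pi:\mathcal Z\to\mathbb{R}^k$ be Lipschitz, and for each $t\in\mathbb{R}^k$ let $\eta_t$ be a finite Radon measure supported on $\pi^{-1}(t)$, such that $\mathcal H$ is equivalent to the Borel measure $A\mapsto\int_{\mathbb{R}^k}\eta_t(A)\,\mathrm dt$ with Radon–Nikodym derivative bounded away from $0$ and $+\infty$. Let $\mu_n:\mathcal Z\to[0,\infty)$ be bounded Borel functions such that (1) the measures $\mu_n\mathcal H$ converge weak* to a finite Radon measure $\mu$; (2) for every $t$, $\int\mu_n\,\mathrm d\eta_t$ converges to a finite number $X(t)$, uniformly in $t$; (3) $t\mapsto X(t)$ is continuous and there is $t_0\in\mathbb{R}^k$ with $X(t_0)\neq0$. Then the push-forward $\pi\mu$ is absolutely continuous with respect to Lebesgue measure, and $t_0$ is an interior point of $\pi(\operatorname{supp}\mu)$. *)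

theory Defs
  imports "HOL-Analysis.Analysis"
begin

definition measure_support :: "'a::topological_space measure \<Rightarrow> 'a set" where
  "measure_support M = {z. \<forall>U. open U \<longrightarrow> z \<in> U \<longrightarrow> emeasure M U > 0}"

definition fibre_measure :: "('b::euclidean_space \<Rightarrow> 'z::topological_space measure) \<Rightarrow> 'z measure" where
  "fibre_measure \<eta> = measure_of UNIV (sets borel) (\<lambda>A. \<integral>\<^sup>+ t. emeasure (\<eta> t) A \<partial>lborel)"

end

theory Submission
  imports Defs
begin

text \<open>Disintegrating \<open>H\<close> along the fibres turns \<open>\<integral> g(\<pi> z) \<mu>\<^sub>n(z) dH\<close> into
  \<open>\<integral> g(t) F\<^sub>n(t) dt\<close> with \<open>F\<^sub>n(t) = \<integral> \<rho> \<mu>\<^sub>n d\<eta>\<^sub>t\<close>, which lies between \<open>c\<close> and \<open>C\<close> times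
  \<open>\<integral> \<mu>\<^sub>n d\<eta>\<^sub>t \<rightarrow> X(t)\<close> and vanishes off the compact set \<open>\<pi>(Z)\<close>. Uniform convergence therefore
  makes \<open>F\<^sub>n\<close> eventually bounded by a constant \<open>K\<close>, and bounded below by a positive constant on
  a ball around \<open>t\<^sub>0\<close>. Testing the weak* convergence with continuous functions of \<open>\<pi>\<close>, the
  push-forward \<open>\<nu> = \<pi>\<mu>\<close> satisfies \<open>\<nu>(U) \<le> K |U|\<close> for open \<open>U\<close>, hence is absolutely continuous
  by outer regularity of Lebesgue measure; and every bump function near \<open>t\<^sub>0\<close> has positive
  \<open>\<nu>\<close>-integral, so a ball around \<open>t\<^sub>0\<close> lies in \<open>supp \<nu>\<close>, which is contained in \<open>\<pi>(supp \<mu>)\<close>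
  because \<open>\<mu>\<close> vanishes on compact sets disjoint from its support.\<close>

section \<open>Disintegration along the fibres\<close>

lemma sets_fibre_measure [simp, measurable_cong]:
  "sets (fibre_measure \<eta>) = sets (borel :: 'z::topological_space measure)"
  unfolding fibre_measure_def by (simp add: sets.sigma_sets_eq[of borel, simplified])

lemma emeasure_fibre_measure:
  fixes \<eta> :: "'b::euclidean_space \<Rightarrow> 'z::topological_space measure"
  assumes sets_\<eta>: "\<And>t. sets (\<eta> t) = sets borel"
    and measurable_\<eta>: "\<And>A. A \<in> sets borel \<Longrightarrow> (\<lambda>t. emeasure (\<eta> t) A) \<in> borel_measurable lborel"
    and A: "A \<in> sets borel"
  shows "emeasure (fibre_measure \<eta>) A = (\<integral>\<^sup>+ t. emeasure (\<eta> t) A \<partial>lborel)"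
  unfolding fibre_measure_def
proof (rule emeasure_measure_of_sigma[OF _ _ _ A])
  show "sigma_algebra UNIV (sets (borel :: 'z measure))"
    by (metis sets.sigma_algebra_axioms space_borel)
  show "positive (sets borel) (\<lambda>A. \<integral>\<^sup>+ t. emeasure (\<eta> t) A \<partial>lborel)"
    by (simp add: positive_def)
  show "countably_additive (sets borel) (\<lambda>A. \<integral>\<^sup>+ t. emeasure (\<eta> t) A \<partial>lborel)"
  proof (rule countably_additiveI)
    fix F :: "nat \<Rightarrow> 'z set"
    assume F: "range F \<subseteq> sets borel" "disjoint_family F"
    have "(\<Sum>i. \<integral>\<^sup>+ t. emeasure (\<eta> t) (F i) \<partial>lborel) = (\<integral>\<^sup>+ t. (\<Sum>i. emeasure (\<eta> t) (F i)) \<partial>lborel)"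
      using F by (intro nn_integral_suminf[symmetric] measurable_\<eta>) auto
    also have "\<dots> = (\<integral>\<^sup>+ t. emeasure (\<eta> t) (\<Union>i. F i) \<partial>lborel)"
      using F by (intro nn_integral_cong suminf_emeasure) (auto simp: sets_\<eta>)
    finally show "(\<Sum>i. \<integral>\<^sup>+ t. emeasure (\<eta> t) (F i) \<partial>lborel) = (\<integral>\<^sup>+ t. emeasure (\<eta> t) (\<Union>i. F i) \<partial>lborel)" .
  qed
qed

lemma nn_integral_fibre_measure:
  fixes \<eta> :: "'b::euclidean_space \<Rightarrow> 'z::topological_space measure"
  assumes sets_\<eta>: "\<And>t. sets (\<eta> t) = sets borel"
    and measurable_\<eta>: "\<And>A. A \<in> sets borel \<Longrightarrow> (\<lambda>t. emeasure (\<eta> t) A) \<in> borel_measurable lborel"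
    and f: "f \<in> borel_measurable borel"
  shows "(\<lambda>t. \<integral>\<^sup>+ z. f z \<partial>\<eta> t) \<in> borel_measurable lborel"
    and "(\<integral>\<^sup>+ z. f z \<partial>fibre_measure \<eta>) = (\<integral>\<^sup>+ t. (\<integral>\<^sup>+ z. f z \<partial>\<eta> t) \<partial>lborel)"
proof -
  note [measurable_cong] = sets_\<eta>
  have "(\<lambda>t. \<integral>\<^sup>+ z. f z \<partial>\<eta> t) \<in> borel_measurable lborel \<and>
    (\<integral>\<^sup>+ z. f z \<partial>fibre_measure \<eta>) = (\<integral>\<^sup>+ t. (\<integral>\<^sup>+ z. f z \<partial>\<eta> t) \<partial>lborel)"
    using f
  proof (induction rule: borel_measurable_induct)
    case (cong f g)
    then show ?case
      by (simp add: sets_eq_imp_space_eq[OF sets_fibre_measure] cong: nn_integral_cong)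
  next
    case (set A)
    then show ?case
      using emeasure_fibre_measure[OF sets_\<eta> measurable_\<eta> set] measurable_\<eta>[OF set]
      by (simp add: sets_\<eta>)
  next
    case (mult u c)
    then show ?case
      by (simp add: nn_integral_cmult borel_measurable_times_ennreal)
  next
    case (add u v)
    then show ?case
      by (simp add: nn_integral_add borel_measurable_add)
  next
    case (seq U)
    have SUP_eq: "(\<integral>\<^sup>+ z. (SUP i. U i) z \<partial>M) = (SUP i. \<integral>\<^sup>+ z. U i z \<partial>M)"
      if "sets M = sets borel" for M :: "'z measure"
      unfolding SUP_apply using seq
      by (intro nn_integral_monotone_convergence_SUP) (auto simp: measurable_cong_sets[OF that refl])
    have "incseq (\<lambda>i t. \<integral>\<^sup>+ z. U i z \<partial>\<eta> t)"
      using \<open>incseq U\<close> by (auto simp: incseq_def le_fun_def intro!: nn_integral_mono)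
    with seq show ?case
      unfolding SUP_eq[OF sets_\<eta>] SUP_eq[OF sets_fibre_measure]
      by (simp add: nn_integral_monotone_convergence_SUP borel_measurable_SUP)
  qed
  then show "(\<lambda>t. \<integral>\<^sup>+ z. f z \<partial>\<eta> t) \<in> borel_measurable lborel"
    and "(\<integral>\<^sup>+ z. f z \<partial>fibre_measure \<eta>) = (\<integral>\<^sup>+ t. (\<integral>\<^sup>+ z. f z \<partial>\<eta> t) \<partial>lborel)"
    by auto
qed

lemma nn_integral_fibre_measure_comp:
  fixes \<eta> :: "'b::euclidean_space \<Rightarrow> 'z::topological_space measure"
  assumes sets_\<eta>: "\<And>t. sets (\<eta> t) = sets borel"
    and measurable_\<eta>: "\<And>A. A \<in> sets borel \<Longrightarrow> (\<lambda>t. emeasure (\<eta> t) A) \<in> borel_measurable lborel"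
    and concentrated: "\<And>t. AE z in \<eta> t. \<pi> z = t"
    and [measurable]: "\<pi> \<in> borel_measurable borel" "g \<in> borel_measurable borel" "f \<in> borel_measurable borel"
  shows "(\<integral>\<^sup>+ z. g (\<pi> z) * f z \<partial>fibre_measure \<eta>) = (\<integral>\<^sup>+ t. g t * (\<integral>\<^sup>+ z. f z \<partial>\<eta> t) \<partial>lborel)"
proof -
  have gf: "(\<lambda>z. g (\<pi> z) * f z) \<in> borel_measurable borel"
    by measurable
  note [measurable_cong] = sets_\<eta>
  have "(\<integral>\<^sup>+ z. g (\<pi> z) * f z \<partial>fibre_measure \<eta>) = (\<integral>\<^sup>+ t. (\<integral>\<^sup>+ z. g (\<pi> z) * f z \<partial>\<eta> t) \<partial>lborel)"
    using nn_integral_fibre_measure(2)[OF sets_\<eta> measurable_\<eta> gf] by simp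
  also have "\<dots> = (\<integral>\<^sup>+ t. (\<integral>\<^sup>+ z. g t * f z \<partial>\<eta> t) \<partial>lborel)"
  proof (rule nn_integral_cong)
    fix t
    show "(\<integral>\<^sup>+ z. g (\<pi> z) * f z \<partial>\<eta> t) = (\<integral>\<^sup>+ z. g t * f z \<partial>\<eta> t)"
      using concentrated[of t] by (rule nn_integral_cong_AE[OF eventually_mono]) simp
  qed
  also have "\<dots> = (\<integral>\<^sup>+ t. g t * (\<integral>\<^sup>+ z. f z \<partial>\<eta> t) \<partial>lborel)"
    by (intro nn_integral_cong nn_integral_cmult) measurable
  finally show ?thesis .
qed

section \<open>Support of a measure\<close>

lemma closed_measure_support: "closed (measure_support \<mu>)"
proof -
  have "- measure_support \<mu> = \<Union> {U. open U \<and> emeasure \<mu> U = 0}"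
    by (auto simp: measure_support_def)
  then show ?thesis
    by (auto simp: closed_def intro!: open_Union)
qed

lemma emeasure_eq_0_if_disjoint_measure_support:
  fixes \<mu> :: "'a::t2_space measure"
  assumes sets_\<mu>: "sets \<mu> = sets borel" and "compact K" and disjoint: "K \<inter> measure_support \<mu> = {}"
  shows "emeasure \<mu> K = 0"
proof -
  have "K \<subseteq> \<Union> {U. open U \<and> emeasure \<mu> U = 0}"
  proof
    fix z assume "z \<in> K"
    then obtain U where "open U" "z \<in> U" "\<not> emeasure \<mu> U > 0"
      using disjoint unfolding measure_support_def by blast
    then show "z \<in> \<Union> {U. open U \<and> emeasure \<mu> U = 0}"
      by auto
  qed
  then obtain \<U> where \<U>: "\<U> \<subseteq> {U. open U \<and> emeasure \<mu> U = 0}" "finite \<U>" "K \<subseteq> \<Union> \<U>"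
    by (rule compactE[OF \<open>compact K\<close>]) auto
  then have "\<Union> \<U> \<in> null_sets \<mu>"
    using sets_\<mu> by (intro null_sets.finite_Union) (auto simp: null_sets_def)
  moreover have "K \<in> sets \<mu>"
    using sets_\<mu> \<open>compact K\<close> by (simp add: compact_imp_closed)
  ultimately show ?thesis
    using \<U>(3) by (blast intro: emeasure_eq_0)
qed

lemma measure_support_distr_subset:
  fixes \<mu> :: "'a::t2_space measure" and \<pi> :: "'a \<Rightarrow> 'b::metric_space"
  assumes compact_UNIV: "compact (UNIV :: 'a set)" and sets_\<mu>: "sets \<mu> = sets borel"
    and sets_N: "sets N = sets borel" and \<pi>: "continuous_on UNIV \<pi>"
  shows "measure_support (distr \<mu> N \<pi>) \<subseteq> \<pi> ` measure_support \<mu>"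
proof
  fix t assume t: "t \<in> measure_support (distr \<mu> N \<pi>)"
  show "t \<in> \<pi> ` measure_support \<mu>"
  proof (rule ccontr)
    assume "t \<notin> \<pi> ` measure_support \<mu>"
    moreover have "compact (measure_support \<mu>)"
      using compact_Int_closed[OF compact_UNIV closed_measure_support] by simp
    then have "open (- \<pi> ` measure_support \<mu>)"
      by (intro open_Compl compact_imp_closed compact_continuous_image continuous_on_subset[OF \<pi>]) auto
    ultimately obtain e where "e > 0" and e: "ball t e \<subseteq> - \<pi> ` measure_support \<mu>"
      using open_contains_ball_eq by blast
    define K where "K = \<pi> -` cball t (e/2)"
    have "closed K"
      unfolding K_def using \<pi> by (intro closed_vimage) auto
    then have "compact K"
      using compact_Int_closed[OF compact_UNIV] by fastforce
    have "\<pi> z \<in> ball t e" if "z \<in> K" for z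
      using that \<open>e > 0\<close> by (simp add: K_def)
    with e have "K \<inter> measure_support \<mu> = {}"
      by blast
    with \<open>compact K\<close> have "emeasure \<mu> K = 0"
      by (rule emeasure_eq_0_if_disjoint_measure_support[OF sets_\<mu>])
    have "\<pi> \<in> measurable \<mu> N"
      using borel_measurable_continuous_onI[OF \<pi>] by (simp add: measurable_cong_sets[OF sets_\<mu> sets_N])
    then have "emeasure (distr \<mu> N \<pi>) (ball t (e/2)) = emeasure \<mu> (\<pi> -` ball t (e/2) \<inter> space \<mu>)"
      by (rule emeasure_distr) (simp add: sets_N)
    also have "\<dots> \<le> emeasure \<mu> K"
      using \<open>closed K\<close> sets_\<mu> by (intro emeasure_mono) (auto simp: K_def)
    finally have "emeasure (distr \<mu> N \<pi>) (ball t (e/2)) = 0"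
      using \<open>emeasure \<mu> K = 0\<close> by simp
    moreover have "emeasure (distr \<mu> N \<pi>) (ball t (e/2)) > 0"
      using t \<open>e > 0\<close> unfolding measure_support_def by simp
    ultimately show False
      by simp
  qed
qed

section \<open>Weak limits of measures with controlled densities\<close>

lemma emeasure_open_le_if_nn_integral_le:
  fixes \<nu> :: "'a::metric_space measure"
  assumes sets_\<nu>: "sets \<nu> = sets borel" and "open U"
    and bound: "\<And>g. continuous_on UNIV g \<Longrightarrow> (\<And>x. 0 \<le> g x) \<Longrightarrow> (\<And>x. g x \<le> indicator U x) \<Longrightarrow>
      (\<integral>\<^sup>+ x. ennreal (g x) \<partial>\<nu>) \<le> a"
  shows "emeasure \<nu> U \<le> a"
proof (cases "U = UNIV")
  case True
  have "emeasure \<nu> U = (\<integral>\<^sup>+ x. ennreal 1 \<partial>\<nu>)"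
    using sets_eq_imp_space_eq[OF sets_\<nu>] True by simp
  also have "\<dots> \<le> a"
    by (rule bound) (auto simp: True)
  finally show ?thesis .
next
  case False
  define g where "g m x = min 1 (real m * infdist x (- U))" for m :: nat and x
  have g_continuous: "continuous_on UNIV (g m)" for m
    unfolding g_def by (intro continuous_intros)
  have "\<forall>\<^sub>F m in sequentially. ennreal (g m x) = indicator U x" for x
  proof (cases "x \<in> U")
    case True
    then have "infdist x (- U) > 0"
      using False \<open>open U\<close> by (intro infdist_pos_not_in_closed) auto
    then obtain N :: nat where "1 < real N * infdist x (- U)"
      by (metis reals_Archimedean3)
    moreover have "real N * infdist x (- U) \<le> real m * infdist x (- U)" if "N \<le> m" for m
      using that \<open>infdist x (- U) > 0\<close> by (intro mult_right_mono) auto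
    ultimately have "\<forall>m\<ge>N. g m x = 1"
      by (force simp: g_def)
    then show ?thesis
      using True by (auto simp: eventually_sequentially)
  qed (simp add: g_def)
  moreover have "g m x \<le> g n x" if "m \<le> n" for m n x
    unfolding g_def using that by (intro min.mono mult_right_mono) (auto simp: infdist_nonneg)
  then have "incseq (\<lambda>m x. ennreal (g m x))"
    by (auto simp: incseq_def le_fun_def intro: ennreal_leI)
  moreover have "(\<lambda>x. ennreal (g m x)) \<in> borel_measurable \<nu>" for m
    using borel_measurable_continuous_onI[OF g_continuous]
    unfolding measurable_cong_sets[OF sets_\<nu> refl] by (rule measurable_compose) simp
  ultimately have "(\<lambda>m. \<integral>\<^sup>+ x. ennreal (g m x) \<partial>\<nu>) \<longlonglongrightarrow> (\<integral>\<^sup>+ x. indicator U x \<partial>\<nu>)"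
    by (intro nn_integral_LIMSEQ tendsto_eventually)
  moreover have "(\<integral>\<^sup>+ x. ennreal (g m x) \<partial>\<nu>) \<le> a" for m
    using g_continuous by (rule bound) (auto simp: g_def infdist_nonneg indicator_def)
  ultimately have "(\<integral>\<^sup>+ x. indicator U x \<partial>\<nu>) \<le> a"
    by (intro tendsto_upperbound) auto
  then show ?thesis
    using \<open>open U\<close> sets_\<nu> by simp
qed

lemma absolutely_continuous_lborel_if_open_le:
  fixes \<nu> :: "'b::euclidean_space measure"
  assumes sets_\<nu>: "sets \<nu> = sets borel"
    and open_le: "\<And>U. open U \<Longrightarrow> emeasure \<nu> U \<le> ennreal K * emeasure lborel U"
  shows "absolutely_continuous lborel \<nu>"
  unfolding absolutely_continuous_def
proof
  fix N :: "'b set" assume N: "N \<in> null_sets lborel"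
  have small: "emeasure \<nu> N \<le> ennreal K * ennreal e" if "e > 0" for e
  proof -
    obtain U where "open U" "N \<subseteq> U" and U: "emeasure lborel (U - N) < e"
      using outer_regular_lborel[OF _ \<open>e > 0\<close>] N by (metis null_setsD2 sets_lborel)
    have "emeasure \<nu> N \<le> emeasure \<nu> U"
      using \<open>N \<subseteq> U\<close> \<open>open U\<close> sets_\<nu> by (intro emeasure_mono) auto
    also have "\<dots> \<le> ennreal K * emeasure lborel U"
      using \<open>open U\<close> by (rule open_le)
    also have "emeasure lborel U = emeasure lborel (U - N)"
      using N \<open>open U\<close> by (simp add: emeasure_Diff_null_set)
    also have "ennreal K * \<dots> \<le> ennreal K * ennreal e"
      using U by (intro mult_left_mono) auto
    finally show ?thesis .
  qed
  have "((\<lambda>e. ennreal K * ennreal e) \<longlongrightarrow> ennreal K * ennreal 0) (at_right 0)"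
    by (intro ennreal_tendsto_cmult tendsto_ennrealI) (auto intro: tendsto_ident_at)
  moreover have "\<forall>\<^sub>F e in at_right 0. emeasure \<nu> N \<le> ennreal K * ennreal e"
    using eventually_at_right_less[of "0::real"] by (rule eventually_mono) (rule small)
  ultimately have "emeasure \<nu> N \<le> 0"
    by (intro tendsto_lowerbound) auto
  then show "N \<in> null_sets \<nu>"
    using N sets_\<nu> by (auto simp: null_sets_def)
qed

lemma absolutely_continuous_lborel_if_densities_bounded:
  fixes \<nu> :: "'b::euclidean_space measure" and F :: "nat \<Rightarrow> 'b \<Rightarrow> ennreal"
  assumes sets_\<nu>: "sets \<nu> = sets borel"
    and weak_limit: "\<And>g. continuous_on UNIV g \<Longrightarrow> (\<And>t. 0 \<le> g t) \<Longrightarrow>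
      (\<lambda>n. \<integral>\<^sup>+ t. ennreal (g t) * F n t \<partial>lborel) \<longlonglongrightarrow> (\<integral>\<^sup>+ t. ennreal (g t) \<partial>\<nu>)"
    and bounded: "\<forall>\<^sub>F n in sequentially. \<forall>t. F n t \<le> ennreal K"
  shows "absolutely_continuous lborel \<nu>"
proof (rule absolutely_continuous_lborel_if_open_le[OF sets_\<nu>])
  fix U :: "'b set" assume "open U"
  show "emeasure \<nu> U \<le> ennreal K * emeasure lborel U"
  proof (rule emeasure_open_le_if_nn_integral_le[OF sets_\<nu> \<open>open U\<close>])
    fix g :: "'b \<Rightarrow> real"
    assume g: "continuous_on UNIV g" "\<And>t. 0 \<le> g t" "\<And>t. g t \<le> indicator U t"
    have g_le: "ennreal (g t) \<le> indicator U t" for t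
      using g(3)[of t] by (auto simp: indicator_def ennreal_neg)
    have "\<forall>\<^sub>F n in sequentially. (\<integral>\<^sup>+ t. ennreal (g t) * F n t \<partial>lborel) \<le> ennreal K * emeasure lborel U"
      using bounded
    proof (rule eventually_mono)
      fix n assume F_le: "\<forall>t. F n t \<le> ennreal K"
      have "(\<integral>\<^sup>+ t. ennreal (g t) * F n t \<partial>lborel) \<le> (\<integral>\<^sup>+ t. indicator U t * ennreal K \<partial>lborel)"
        using g_le F_le by (intro nn_integral_mono mult_mono) auto
      also have "\<dots> = ennreal K * emeasure lborel U"
        using \<open>open U\<close> by (simp add: nn_integral_cmult_indicator mult.commute)
      finally show "(\<integral>\<^sup>+ t. ennreal (g t) * F n t \<partial>lborel) \<le> ennreal K * emeasure lborel U" .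
    qed
    then show "(\<integral>\<^sup>+ t. ennreal (g t) \<partial>\<nu>) \<le> ennreal K * emeasure lborel U"
      by (intro tendsto_upperbound[OF weak_limit[OF g(1,2)]]) auto
  qed
qed

lemma exists_bump_function:
  fixes t :: "'a::euclidean_space"
  assumes "r > 0"
  obtains g where "continuous_on UNIV g" "\<And>s. 0 \<le> g s" "\<And>s. g s \<le> 1"
    "\<And>s. g s \<noteq> 0 \<Longrightarrow> s \<in> ball t r" "0 < (\<integral>\<^sup>+ s. ennreal (g s) \<partial>lborel)"
proof -
  define g where "g s = max 0 (1 - dist s t / r)" for s
  have g_continuous: "continuous_on UNIV g"
    unfolding g_def using \<open>r > 0\<close> by (intro continuous_intros) auto
  have g_bounds: "0 \<le> g s" "g s \<le> 1" for s
    using \<open>r > 0\<close> by (simp_all add: g_def)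
  have g_support: "s \<in> ball t r" if "g s \<noteq> 0" for s
  proof -
    define q where "q = dist s t / r"
    have "max 0 (1 - q) \<noteq> 0"
      using that unfolding g_def q_def .
    then have "q < 1"
      by (simp add: max_def split: if_splits)
    then show ?thesis
      using \<open>r > 0\<close> by (simp add: q_def dist_commute divide_less_eq)
  qed
  have g_ge_half: "1/2 \<le> g s" if "s \<in> ball t (r/2)" for s
  proof -
    define q where "q = dist s t / r"
    have "q < 1/2"
      using that \<open>r > 0\<close> by (simp add: q_def dist_commute divide_less_eq)
    then have "1/2 \<le> max 0 (1 - q)"
      by linarith
    then show ?thesis
      unfolding g_def q_def .
  qed
  have "0 < (\<integral>\<^sup>+ s. ennreal (g s) \<partial>lborel)"
  proof -
    have "0 < ennreal (1/2) * emeasure lborel (ball t (r/2))"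
      using \<open>r > 0\<close> by (simp add: emeasure_ball ennreal_zero_less_mult_iff ennreal_inverse_positive)
    also have "\<dots> = (\<integral>\<^sup>+ s. ennreal (1/2) * indicator (ball t (r/2)) s \<partial>lborel)"
      by (simp add: nn_integral_cmult_indicator)
    also have "\<dots> \<le> (\<integral>\<^sup>+ s. ennreal (g s) \<partial>lborel)"
    proof (rule nn_integral_mono)
      fix s
      show "ennreal (1/2) * indicator (ball t (r/2)) s \<le> ennreal (g s)"
        using ennreal_leI[OF g_ge_half[of s]] by (cases "s \<in> ball t (r/2)") auto
    qed
    finally show ?thesis .
  qed
  with g_continuous g_bounds g_support show ?thesis
    by (rule that)
qed

lemma subset_measure_support_if_densities_bounded_below:
  fixes \<nu> :: "'b::euclidean_space measure" and F :: "nat \<Rightarrow> 'b \<Rightarrow> ennreal"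
  assumes sets_\<nu>: "sets \<nu> = sets borel"
    and weak_limit: "\<And>g. continuous_on UNIV g \<Longrightarrow> (\<And>t. 0 \<le> g t) \<Longrightarrow>
      (\<lambda>n. \<integral>\<^sup>+ t. ennreal (g t) * F n t \<partial>lborel) \<longlonglongrightarrow> (\<integral>\<^sup>+ t. ennreal (g t) \<partial>\<nu>)"
    and "open S" and "a > 0"
    and bounded_below: "\<forall>\<^sub>F n in sequentially. \<forall>t\<in>S. ennreal a \<le> F n t"
  shows "S \<subseteq> measure_support \<nu>"
proof
  fix t assume "t \<in> S"
  have "emeasure \<nu> U > 0" if "open U" "t \<in> U" for U
  proof -
    obtain r where "r > 0" and r: "ball t r \<subseteq> U \<inter> S"
      using open_contains_ball_eq[OF open_Int[OF \<open>open U\<close> \<open>open S\<close>]] \<open>t \<in> S\<close> \<open>t \<in> U\<close> by blast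
    obtain g where g: "continuous_on UNIV g" "\<And>s. 0 \<le> g s" "\<And>s. g s \<le> 1"
      and g_support: "\<And>s. g s \<noteq> 0 \<Longrightarrow> s \<in> ball t r" and g_pos: "0 < (\<integral>\<^sup>+ s. ennreal (g s) \<partial>lborel)"
      using exists_bump_function[OF \<open>r > 0\<close>] by blast
    have "\<forall>\<^sub>F n in sequentially.
        ennreal a * (\<integral>\<^sup>+ s. ennreal (g s) \<partial>lborel) \<le> (\<integral>\<^sup>+ s. ennreal (g s) * F n s \<partial>lborel)"
      using bounded_below
    proof (rule eventually_mono)
      fix n assume F_ge: "\<forall>s\<in>S. ennreal a \<le> F n s"
      have "ennreal a * (\<integral>\<^sup>+ s. ennreal (g s) \<partial>lborel) = (\<integral>\<^sup>+ s. ennreal (g s) * ennreal a \<partial>lborel)"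
        using borel_measurable_continuous_onI[OF g(1)]
        by (subst nn_integral_multc) (auto simp: mult.commute)
      also have "\<dots> \<le> (\<integral>\<^sup>+ s. ennreal (g s) * F n s \<partial>lborel)"
      proof (rule nn_integral_mono)
        fix s
        show "ennreal (g s) * ennreal a \<le> ennreal (g s) * F n s"
        proof (cases "g s = 0")
          case False
          then have "s \<in> S"
            using g_support r by blast
          then show ?thesis
            using F_ge by (simp add: mult_left_mono)
        qed simp
      qed
      finally show "ennreal a * (\<integral>\<^sup>+ s. ennreal (g s) \<partial>lborel) \<le> (\<integral>\<^sup>+ s. ennreal (g s) * F n s \<partial>lborel)" .
    qed
    then have "ennreal a * (\<integral>\<^sup>+ s. ennreal (g s) \<partial>lborel) \<le> (\<integral>\<^sup>+ s. ennreal (g s) \<partial>\<nu>)"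
      by (intro tendsto_lowerbound[OF weak_limit[OF g(1,2)]]) auto
    also have "\<dots> \<le> (\<integral>\<^sup>+ s. indicator U s \<partial>\<nu>)"
    proof (rule nn_integral_mono)
      fix s
      show "ennreal (g s) \<le> indicator U s"
        using g(3)[of s] g_support[of s] r by (cases "g s = 0") auto
    qed
    also have "\<dots> = emeasure \<nu> U"
      using \<open>open U\<close> sets_\<nu> by simp
    finally have "ennreal a * (\<integral>\<^sup>+ s. ennreal (g s) \<partial>lborel) \<le> emeasure \<nu> U" .
    moreover have "0 < ennreal a * (\<integral>\<^sup>+ s. ennreal (g s) \<partial>lborel)"
      using g_pos \<open>a > 0\<close> by (simp add: ennreal_zero_less_mult_iff)
    ultimately show ?thesis
      by (rule order.strict_trans2[rotated])
  qed
  then show "t \<in> measure_support \<nu>"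
    unfolding measure_support_def by blast
qed

locale fibred_weak_star_limit =
  fixes H :: "'z::metric_space measure" and \<pi> :: "'z \<Rightarrow> 'b::euclidean_space"
    and \<eta> :: "'b \<Rightarrow> 'z measure" and \<rho> :: "'z \<Rightarrow> real" and c C :: real
    and \<mu>n :: "nat \<Rightarrow> 'z \<Rightarrow> real" and \<mu> :: "'z measure" and X :: "'b \<Rightarrow> real"
  assumes compact_UNIV: "compact (UNIV :: 'z set)"
    and finite_H: "finite_measure H"
    and continuous_\<pi>: "continuous_on UNIV \<pi>"
    and sets_\<eta> [measurable_cong]: "\<And>t. sets (\<eta> t) = sets borel"
    and finite_\<eta>: "\<And>t. finite_measure (\<eta> t)"
    and \<eta>_concentrated: "\<And>t. emeasure (\<eta> t) (UNIV - \<pi> -` {t}) = 0"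
    and measurable_\<eta>: "\<And>A. A \<in> sets borel \<Longrightarrow> (\<lambda>t. emeasure (\<eta> t) A) \<in> borel_measurable lborel"
    and measurable_\<rho> [measurable]: "\<rho> \<in> borel_measurable borel"
    and c_pos: "0 < c" and \<rho>_bounds: "\<And>z. c \<le> \<rho> z \<and> \<rho> z \<le> C"
    and H_density: "H = density (fibre_measure \<eta>) (\<lambda>z. ennreal (\<rho> z))"
    and measurable_\<mu>n [measurable]: "\<And>n. \<mu>n n \<in> borel_measurable borel"
    and \<mu>n_nonneg: "\<And>n z. 0 \<le> \<mu>n n z"
    and \<mu>n_bounded: "\<And>n. \<exists>B. \<forall>z. \<mu>n n z \<le> B"
    and sets_\<mu> [measurable_cong]: "sets \<mu> = sets borel"
    and finite_\<mu>: "finite_measure \<mu>"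
    and weak_star: "\<And>f::'z \<Rightarrow> real. continuous_on UNIV f \<Longrightarrow>
      (\<lambda>n. \<integral>z. f z * \<mu>n n z \<partial>H) \<longlonglongrightarrow> (\<integral>z. f z \<partial>\<mu>)"
    and uniform: "uniform_limit UNIV (\<lambda>n t. \<integral>z. \<mu>n n z \<partial>\<eta> t) X sequentially"
    and continuous_X: "continuous_on UNIV X"
begin

lemma sets_H [measurable_cong]: "sets H = sets borel"
  by (simp add: H_density)

lemma measurable_\<pi> [measurable]: "\<pi> \<in> borel_measurable borel"
  by (rule borel_measurable_continuous_onI[OF continuous_\<pi>])

lemma AE_fibre: "AE z in \<eta> t. \<pi> z = t"
proof (rule AE_I')
  show "UNIV - \<pi> -` {t} \<in> null_sets (\<eta> t)"
    using \<eta>_concentrated measurable_sets_borel[OF measurable_\<pi>, of "{t}"]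
    by (auto simp: null_sets_def sets_\<eta> borel_comp)
qed auto

definition push_density :: "nat \<Rightarrow> 'b \<Rightarrow> ennreal" where
  "push_density n t = (\<integral>\<^sup>+ z. ennreal (\<rho> z) * ennreal (\<mu>n n z) \<partial>\<eta> t)"

lemma nn_integral_H_comp:
  assumes [measurable]: "g \<in> borel_measurable borel"
  shows "(\<integral>\<^sup>+ z. g (\<pi> z) * ennreal (\<mu>n n z) \<partial>H) = (\<integral>\<^sup>+ t. g t * push_density n t \<partial>lborel)"
proof -
  have "(\<integral>\<^sup>+ z. g (\<pi> z) * ennreal (\<mu>n n z) \<partial>H) =
      (\<integral>\<^sup>+ z. g (\<pi> z) * (ennreal (\<rho> z) * ennreal (\<mu>n n z)) \<partial>fibre_measure \<eta>)"
    unfolding H_density by (subst nn_integral_density) (auto simp: mult_ac)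
  also have "\<dots> = (\<integral>\<^sup>+ t. g t * push_density n t \<partial>lborel)"
    unfolding push_density_def
    using nn_integral_fibre_measure_comp[OF sets_\<eta> measurable_\<eta> AE_fibre measurable_\<pi> assms]
    by simp
  finally show ?thesis .
qed

lemma tendsto_push_density:
  assumes g: "continuous_on UNIV g" and g_nonneg: "\<And>t. 0 \<le> g t"
  shows "(\<lambda>n. \<integral>\<^sup>+ t. ennreal (g t) * push_density n t \<partial>lborel) \<longlonglongrightarrow> (\<integral>\<^sup>+ t. ennreal (g t) \<partial>distr \<mu> lborel \<pi>)"
proof -
  have g\<pi>: "continuous_on UNIV (\<lambda>z. g (\<pi> z))"
    using continuous_on_compose2[OF g continuous_\<pi>] by auto
  then obtain B where B: "\<And>z. \<bar>g (\<pi> z)\<bar> \<le> B"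
    using compact_imp_bounded[OF compact_continuous_image[OF g\<pi> compact_UNIV]] bounded_real by fastforce
  have [measurable]: "g \<in> borel_measurable borel" "(\<lambda>z. g (\<pi> z)) \<in> borel_measurable borel"
    using g g\<pi> by (simp_all add: borel_measurable_continuous_onI)
  have "ennreal (\<integral>z. g (\<pi> z) * \<mu>n n z \<partial>H) = (\<integral>\<^sup>+ t. ennreal (g t) * push_density n t \<partial>lborel)" for n
  proof -
    obtain Bn where Bn: "\<And>z. \<mu>n n z \<le> Bn"
      using \<mu>n_bounded by blast
    have "norm (g (\<pi> z) * \<mu>n n z) \<le> B * Bn" for z
      using B[of z] Bn[of z] \<mu>n_nonneg[of n z] abs_ge_zero[of "g (\<pi> z)"]
      by (simp add: abs_mult mult_mono)
    then have "integrable H (\<lambda>z. g (\<pi> z) * \<mu>n n z)"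
      by (intro finite_measure.integrable_const_bound[OF finite_H, of _ "B * Bn"]) auto
    then have "ennreal (\<integral>z. g (\<pi> z) * \<mu>n n z \<partial>H) = (\<integral>\<^sup>+ z. ennreal (g (\<pi> z) * \<mu>n n z) \<partial>H)"
      using g_nonneg \<mu>n_nonneg by (intro nn_integral_eq_integral[symmetric]) auto
    also have "\<dots> = (\<integral>\<^sup>+ z. ennreal (g (\<pi> z)) * ennreal (\<mu>n n z) \<partial>H)"
      using g_nonneg \<mu>n_nonneg by (simp add: ennreal_mult)
    also have "\<dots> = (\<integral>\<^sup>+ t. ennreal (g t) * push_density n t \<partial>lborel)"
      by (rule nn_integral_H_comp) simp
    finally show ?thesis .
  qed
  moreover have "ennreal (\<integral>z. g (\<pi> z) \<partial>\<mu>) = (\<integral>\<^sup>+ t. ennreal (g t) \<partial>distr \<mu> lborel \<pi>)"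
  proof -
    have "integrable \<mu> (\<lambda>z. g (\<pi> z))"
      using B by (intro finite_measure.integrable_const_bound[OF finite_\<mu>, of _ B]) auto
    then show ?thesis
      using g_nonneg by (simp add: nn_integral_eq_integral nn_integral_distr)
  qed
  ultimately show ?thesis
    using tendsto_ennrealI[OF weak_star[OF g\<pi>]] by simp
qed

lemma ennreal_fibre_integral: "ennreal (\<integral>z. \<mu>n n z \<partial>\<eta> t) = (\<integral>\<^sup>+ z. ennreal (\<mu>n n z) \<partial>\<eta> t)"
proof -
  obtain B where "\<And>z. \<mu>n n z \<le> B"
    using \<mu>n_bounded by blast
  then have "integrable (\<eta> t) (\<mu>n n)"
    using \<mu>n_nonneg by (intro finite_measure.integrable_const_bound[OF finite_\<eta>, of _ B]) auto
  then show ?thesis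
    using \<mu>n_nonneg by (simp add: nn_integral_eq_integral)
qed

lemma push_density_bounds:
  shows "ennreal c * ennreal (\<integral>z. \<mu>n n z \<partial>\<eta> t) \<le> push_density n t"
    and "push_density n t \<le> ennreal C * ennreal (\<integral>z. \<mu>n n z \<partial>\<eta> t)"
proof -
  have \<mu>n_\<eta>: "(\<lambda>z. ennreal (\<mu>n n z)) \<in> borel_measurable (\<eta> t)"
    by measurable
  have "ennreal c * ennreal (\<integral>z. \<mu>n n z \<partial>\<eta> t) = (\<integral>\<^sup>+ z. ennreal c * ennreal (\<mu>n n z) \<partial>\<eta> t)"
    by (simp add: ennreal_fibre_integral nn_integral_cmult \<mu>n_\<eta>)
  also have "\<dots> \<le> push_density n t"
    unfolding push_density_def using \<rho>_bounds by (intro nn_integral_mono mult_right_mono ennreal_leI) auto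
  finally show "ennreal c * ennreal (\<integral>z. \<mu>n n z \<partial>\<eta> t) \<le> push_density n t" .
  have "push_density n t \<le> (\<integral>\<^sup>+ z. ennreal C * ennreal (\<mu>n n z) \<partial>\<eta> t)"
    unfolding push_density_def using \<rho>_bounds by (intro nn_integral_mono mult_right_mono ennreal_leI) auto
  also have "\<dots> = ennreal C * ennreal (\<integral>z. \<mu>n n z \<partial>\<eta> t)"
    by (simp add: ennreal_fibre_integral nn_integral_cmult \<mu>n_\<eta>)
  finally show "push_density n t \<le> ennreal C * ennreal (\<integral>z. \<mu>n n z \<partial>\<eta> t)" .
qed

lemma push_density_outside_range:
  assumes "t \<notin> range \<pi>"
  shows "push_density n t = 0"
proof -
  have "AE z in \<eta> t. False"
    using AE_fibre[of t] assms by (auto elim: eventually_mono)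
  then have "push_density n t = (\<integral>\<^sup>+ z. 0 \<partial>\<eta> t)"
    unfolding push_density_def by (intro nn_integral_cong_AE) (auto elim: eventually_mono)
  then show ?thesis
    by simp
qed

lemma eventually_fibre_integral_close:
  assumes "e > 0"
  shows "\<forall>\<^sub>F n in sequentially. \<forall>t. \<bar>(\<integral>z. \<mu>n n z \<partial>\<eta> t) - X t\<bar> < e"
  using uniform_limitD[OF uniform assms] by (simp add: dist_real_def)

lemma push_density_eventually_bounded:
  obtains K where "\<forall>\<^sub>F n in sequentially. \<forall>t. push_density n t \<le> ennreal K"
proof -
  have "compact (X ` range \<pi>)"
    using compact_continuous_image[OF continuous_on_subset[OF continuous_X]
        compact_continuous_image[OF continuous_\<pi> compact_UNIV]] by blast
  then obtain M where M: "\<And>t. t \<in> range \<pi> \<Longrightarrow> \<bar>X t\<bar> \<le> M"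
    using compact_imp_bounded bounded_real by (metis imageI)
  have "0 \<le> C"
    using c_pos \<rho>_bounds[of undefined] by linarith
  have bound: "push_density n t \<le> ennreal (C * (M + 1))"
    if close: "\<forall>t. \<bar>(\<integral>z. \<mu>n n z \<partial>\<eta> t) - X t\<bar> < 1" for n t
  proof (cases "t \<in> range \<pi>")
    case True
    then have "(\<integral>z. \<mu>n n z \<partial>\<eta> t) \<le> M + 1"
      using spec[OF close, of t] M[OF True] unfolding abs_less_iff abs_le_iff by linarith
    then have "ennreal C * ennreal (\<integral>z. \<mu>n n z \<partial>\<eta> t) \<le> ennreal (C * (M + 1))"
      using \<open>0 \<le> C\<close> by (simp add: ennreal_mult'[symmetric] mult_left_mono ennreal_leI)
    then show ?thesis
      using push_density_bounds(2) order_trans by blast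
  qed (simp add: push_density_outside_range)
  have "\<forall>\<^sub>F n in sequentially. \<forall>t. push_density n t \<le> ennreal (C * (M + 1))"
    using eventually_fibre_integral_close[OF zero_less_one] by (rule eventually_mono) (use bound in blast)
  then show ?thesis
    by (rule that)
qed

lemma push_density_eventually_bounded_below:
  assumes "X t0 \<noteq> 0"
  obtains r a where "r > 0" "a > 0" "\<forall>\<^sub>F n in sequentially. \<forall>t\<in>ball t0 r. ennreal a \<le> push_density n t"
proof -
  have "(\<lambda>n. \<integral>z. \<mu>n n z \<partial>\<eta> t0) \<longlonglongrightarrow> X t0"
    by (rule tendsto_uniform_limitI[OF uniform]) simp
  then have "0 \<le> X t0"
    by (rule tendsto_lowerbound) (auto simp: \<mu>n_nonneg)
  with assms have "X t0 > 0"
    by simp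
  then obtain r where "r > 0" and r: "\<And>t. dist t t0 < r \<Longrightarrow> dist (X t) (X t0) < X t0 / 2"
    using continuous_X unfolding continuous_on_iff by (metis UNIV_I half_gt_zero)
  have bound: "ennreal (c * (X t0 / 4)) \<le> push_density n t"
    if close: "\<forall>t. \<bar>(\<integral>z. \<mu>n n z \<partial>\<eta> t) - X t\<bar> < X t0 / 4" and "t \<in> ball t0 r" for n t
  proof -
    have "dist (X t) (X t0) < X t0 / 2"
      using r[of t] \<open>t \<in> ball t0 r\<close> by (simp add: dist_commute)
    moreover have "\<bar>(\<integral>z. \<mu>n n z \<partial>\<eta> t) - X t\<bar> < X t0 / 4"
      using close by blast
    ultimately have "X t0 / 4 \<le> (\<integral>z. \<mu>n n z \<partial>\<eta> t)"
      unfolding dist_real_def abs_less_iff by linarith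
    then have "ennreal (c * (X t0 / 4)) \<le> ennreal c * ennreal (\<integral>z. \<mu>n n z \<partial>\<eta> t)"
      using c_pos \<open>X t0 > 0\<close> by (simp add: ennreal_mult[symmetric] ennreal_leI)
    then show ?thesis
      using push_density_bounds(1) order_trans by blast
  qed
  have "\<forall>\<^sub>F n in sequentially. \<forall>t\<in>ball t0 r. ennreal (c * (X t0 / 4)) \<le> push_density n t"
    using eventually_fibre_integral_close[of "X t0 / 4"] \<open>X t0 > 0\<close> bound
    by (auto elim!: eventually_mono)
  moreover have "c * (X t0 / 4) > 0"
    using c_pos \<open>X t0 > 0\<close> by simp
  ultimately show ?thesis
    using that[OF \<open>r > 0\<close>] by blast
qed

theorem absolutely_continuous_distr: "absolutely_continuous lborel (distr \<mu> lborel \<pi>)"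
proof -
  obtain K where K: "\<forall>\<^sub>F n in sequentially. \<forall>t. push_density n t \<le> ennreal K"
    by (rule push_density_eventually_bounded)
  have "sets (distr \<mu> lborel \<pi>) = sets borel"
    by simp
  then show ?thesis
    using tendsto_push_density K by (rule absolutely_continuous_lborel_if_densities_bounded)
qed

theorem interior_image_measure_support:
  assumes "X t0 \<noteq> 0"
  shows "t0 \<in> interior (\<pi> ` measure_support \<mu>)"
proof -
  obtain r a where "r > 0" "a > 0"
    and bounded_below: "\<forall>\<^sub>F n in sequentially. \<forall>t\<in>ball t0 r. ennreal a \<le> push_density n t"
    using push_density_eventually_bounded_below[OF assms] .
  have "sets (distr \<mu> lborel \<pi>) = sets borel"
    by simp
  then have "ball t0 r \<subseteq> measure_support (distr \<mu> lborel \<pi>)"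
    using tendsto_push_density open_ball \<open>a > 0\<close> bounded_below
    by (rule subset_measure_support_if_densities_bounded_below)
  also have "\<dots> \<subseteq> \<pi> ` measure_support \<mu>"
    by (rule measure_support_distr_subset[OF compact_UNIV sets_\<mu> sets_lborel continuous_\<pi>])
  finally have "ball t0 r \<subseteq> interior (\<pi> ` measure_support \<mu>)"
    by (rule interior_maximal) simp
  then show ?thesis
    using \<open>r > 0\<close> by auto
qed

end

theorem lemma3p5:
  fixes H :: "'z::metric_space measure"
    and \<pi> :: "'z \<Rightarrow> 'b::euclidean_space"
    and \<eta> :: "'b \<Rightarrow> 'z measure"
    and \<mu>n :: "nat \<Rightarrow> 'z \<Rightarrow> real"
    and \<mu> :: "'z measure"
    and X :: "'b \<Rightarrow> real"
    and t0 :: 'b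
  assumes Z_compact: "compact (UNIV :: 'z set)"
    and H_borel: "sets H = sets borel" and H_finite: "finite_measure H"
    and \<pi>_lipschitz: "\<exists>L. L-lipschitz_on UNIV \<pi>"
    and \<eta>_borel: "\<And>t. sets (\<eta> t) = sets borel"
    and \<eta>_finite: "\<And>t. finite_measure (\<eta> t)"
    and \<eta>_supp: "\<And>t. emeasure (\<eta> t) (UNIV - \<pi> -` {t}) = 0"
    and \<eta>_meas: "\<And>A. A \<in> sets borel \<Longrightarrow> (\<lambda>t. emeasure (\<eta> t) A) \<in> borel_measurable lborel"
    and H_equiv: "\<exists>\<rho> c C. \<rho> \<in> borel_measurable borel \<and> 0 < c \<and> c \<le> C \<and>
                      (\<forall>z. c \<le> \<rho> z \<and> \<rho> z \<le> C) \<and>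
                      H = density (fibre_measure \<eta>) (\<lambda>z. ennreal (\<rho> z))"
    and \<mu>n_meas: "\<And>n. \<mu>n n \<in> borel_measurable borel"
    and \<mu>n_nonneg: "\<And>n z. 0 \<le> \<mu>n n z"
    and \<mu>n_bdd: "\<And>n. \<exists>B. \<forall>z. \<mu>n n z \<le> B"
    and \<mu>_borel: "sets \<mu> = sets borel" and \<mu>_finite: "finite_measure \<mu>"
    and weak_star: "\<And>f::'z \<Rightarrow> real. continuous_on UNIV f \<Longrightarrow>
                       (\<lambda>n. \<integral>z. f z * \<mu>n n z \<partial>H) \<longlonglongrightarrow> (\<integral>z. f z \<partial>\<mu>)"
    and unif: "uniform_limit UNIV (\<lambda>n t. \<integral>z. \<mu>n n z \<partial>(\<eta> t)) X sequentially"
    and X_cont: "continuous_on UNIV X"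
    and X_t0: "X t0 \<noteq> 0"
  shows "absolutely_continuous lborel (distr \<mu> lborel \<pi>)
         \<and> t0 \<in> interior (\<pi> ` measure_support \<mu>)"
proof -
  obtain \<rho> c C where "\<rho> \<in> borel_measurable borel" "0 < c" "\<And>z. c \<le> \<rho> z \<and> \<rho> z \<le> C"
    and "H = density (fibre_measure \<eta>) (\<lambda>z. ennreal (\<rho> z))"
    using H_equiv by blast
  have "continuous_on UNIV \<pi>"
    using \<pi>_lipschitz lipschitz_on_continuous_on by blast
  interpret fibred_weak_star_limit H \<pi> \<eta> \<rho> c C \<mu>n \<mu> X
    by (rule fibred_weak_star_limit.intro; fact)
  show ?thesis
    using absolutely_continuous_distr interior_image_measure_support[OF X_t0] by blast
qed

end
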